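(* Let $S$ be a finite $p$-group and $\mathcal{A}$ a divisible $S$-algebra with an $(S,S)$-invariant $\mathcal{O}$-basis $Y\subseteq\mathcal{A}^\times$. Then $Y$ is $\mathfrak{F}_S(\mathcal{A})$-stable: for every $P\le S$ and every $\varphi\in\mathrm{Hom}_{\mathfrak{F}_S(\mathcal{A})}(P,S)$, ${}^\varphi_PY_S\cong{}_PY_S$ as $(P,S)$-bisets.
   Context: $\mathcal{O}$ is a complete local noetherian domain with maximal ideal $\mathfrak{m}$ and algebraically closed residue field of characteristic $p$. An interior $S$-algebra is an $\mathcal{O}$-free finite-rank $\mathcal{O}$-algebra $\mathcal{A}$ with a group homomorphism $S\to\mathcal{A}^\times$; $S\times S$ acts by $(s,t)a=sat^{-1}$. It is bifree if it has an $\mathcal{O}$-basis $Y$ with $sY=Y=Ys$ for $s\in S$ ($(S,S)$-invariant basis) on which left and right actions are free. For $U\le S\times S$, $\mathcal{A}(U)=\mathcal{A}^U/(\mathfrak{m}\mathcal{A}^U+\sum_{V<U}\mathrm{tr}_V^U\mathcal{A}^V)$; for injective $\varphi:P\to S$, $\mathcal{A}(\varphi)=\mathcal{A}(\Delta(\varphi,P))$, $\Delta(\varphi,P)=\{(\varphi(p),p)\}$. $\mathfrak{F}_S(\mathcal{A})$ has objects the subgroups of $S$ and $\mathrm{Hom}(P,Q)=\{\varphi:P\to Q$ injective$:\mathcal{A}(\varphi)\ne0\}$. A bifree $S$-algebra is divisible if $\mathfrak{F}_S(\mathcal{A})$ contains all inclusions, is closed under composition, and every morphism is an inclusion composed with a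 group isomorphism onto its image that is an isomorphism in $\mathfrak{F}_S(\mathcal{A})$. ${}_PY_S$ is $Y$ with left action restricted to $P$; ${}^\varphi_PY_S$ is $Y$ with action $p\odot y\odot s=\varphi(p)ys$. *)

theory Defs
  imports "HOL-Algebra.Coset" "HOL-Computational_Algebra.Primes"
begin

text \<open>The ring O is the whole type 'o (an integral domain); m is a set of elements of 'o.\<close>

definition is_ideal :: "'o::comm_ring_1 set \<Rightarrow> bool" where
  "is_ideal I \<longleftrightarrow> 0 \<in> I \<and> (\<forall>x\<in>I. \<forall>y\<in>I. x + y \<in> I) \<and> (\<forall>r. \<forall>x\<in>I. r * x \<in> I)"

definition ideal_gen :: "'o::comm_ring_1 set \<Rightarrow> 'o set" where
  "ideal_gen F = {x. \<exists>(n::nat) r g. (\<forall>i<n. g i \<in> F) \<and> x = (\<Sum>i<n. r i * g i)}"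

definition noetherian_ring :: "'o::comm_ring_1 itself \<Rightarrow> bool" where
  "noetherian_ring _ \<longleftrightarrow> (\<forall>I::'o set. is_ideal I \<longrightarrow> (\<exists>F. finite F \<and> F \<subseteq> I \<and> I = ideal_gen F))"

definition maximal_ideal :: "'o::comm_ring_1 set \<Rightarrow> bool" where
  "maximal_ideal M \<longleftrightarrow> is_ideal M \<and> 1 \<notin> M \<and>
     (\<forall>J. is_ideal J \<and> M \<subseteq> J \<longrightarrow> J = M \<or> J = UNIV)"

definition local_ring_max :: "'o::comm_ring_1 set \<Rightarrow> bool" where
  "local_ring_max M \<longleftrightarrow> maximal_ideal M \<and> (\<forall>J. maximal_ideal J \<longrightarrow> J = M)"

fun ideal_pow :: "'o::comm_ring_1 set \<Rightarrow> nat \<Rightarrow> 'o set" where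
  "ideal_pow M 0 = UNIV"
| "ideal_pow M (Suc n) = ideal_gen {x * y | x y. x \<in> M \<and> y \<in> ideal_pow M n}"

definition adically_complete :: "'o::comm_ring_1 set \<Rightarrow> bool" where
  "adically_complete M \<longleftrightarrow> (\<Inter>n. ideal_pow M n) = {0} \<and>
     (\<forall>x::nat \<Rightarrow> 'o. (\<forall>n. x (Suc n) - x n \<in> ideal_pow M n) \<longrightarrow>
        (\<exists>l. \<forall>n. l - x n \<in> ideal_pow M n))"

definition residue_alg_closed :: "'o::comm_ring_1 set \<Rightarrow> bool" where
  "residue_alg_closed M \<longleftrightarrow> (\<forall>n::nat. \<forall>a::nat \<Rightarrow> 'o. n \<ge> 1 \<longrightarrow>
      (\<exists>x. x ^ n + (\<Sum>i<n. a i * x ^ i) \<in> M))"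

definition residue_char :: "'o::comm_ring_1 set \<Rightarrow> nat \<Rightarrow> bool" where
  "residue_char M p \<longleftrightarrow> (of_nat p :: 'o) \<in> M \<and> (\<forall>k. 0 < k \<and> k < p \<longrightarrow> (of_nat k :: 'o) \<notin> M)"

definition standing_O :: "'o::idom set \<Rightarrow> nat \<Rightarrow> bool" where
  "standing_O M p \<longleftrightarrow> noetherian_ring TYPE('o) \<and> local_ring_max M \<and> adically_complete M
     \<and> residue_alg_closed M \<and> residue_char M p"

text \<open>The algebra A is the whole type 'a (a ring); iota : O \<rightarrow> Z(A) is the structure map,
  the O-module structure being r . a = iota r * a.\<close>

definition O_algebra :: "('o::comm_ring_1 \<Rightarrow> 'a::ring_1) \<Rightarrow> bool" where
  "O_algebra \<iota> \<longleftrightarrow> \<iota> 1 = 1 \<and> (\<forall>x y. \<iota> (x + y) = \<iota> x + \<iota> y) \<and> (\<forall>x y. \<iota> (x * y) = \<iota> x * \<iota> y)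
     \<and> (\<forall>r a. \<iota> r * a = a * \<iota> r)"

definition O_basis :: "('o::comm_ring_1 \<Rightarrow> 'a::ring_1) \<Rightarrow> 'a set \<Rightarrow> bool" where
  "O_basis \<iota> Y \<longleftrightarrow> finite Y \<and>
     (\<forall>a. \<exists>!c. (\<forall>y. y \<notin> Y \<longrightarrow> c y = 0) \<and> a = (\<Sum>y\<in>Y. \<iota> (c y) * y))"

definition unit_of :: "'a::ring_1 \<Rightarrow> bool" where
  "unit_of y \<longleftrightarrow> (\<exists>z. y * z = 1 \<and> z * y = 1)"

definition interior_alg :: "('g, 'b) monoid_scheme \<Rightarrow> ('o::comm_ring_1 \<Rightarrow> 'a::ring_1) \<Rightarrow> ('g \<Rightarrow> 'a) \<Rightarrow> bool" where
  "interior_alg S \<iota> \<sigma> \<longleftrightarrow> O_algebra \<iota> \<and> (\<exists>Y. O_basis \<iota> Y) \<and> \<sigma> \<one>\<^bsub>S\<^esub> = 1 \<and>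
     (\<forall>s\<in>carrier S. \<forall>t\<in>carrier S. \<sigma> (s \<otimes>\<^bsub>S\<^esub> t) = \<sigma> s * \<sigma> t) \<and>
     (\<forall>s\<in>carrier S. unit_of (\<sigma> s))"

definition SS_invariant :: "('g, 'b) monoid_scheme \<Rightarrow> ('g \<Rightarrow> 'a::ring_1) \<Rightarrow> 'a set \<Rightarrow> bool" where
  "SS_invariant S \<sigma> Y \<longleftrightarrow> (\<forall>s\<in>carrier S. (\<lambda>y. \<sigma> s * y) ` Y = Y \<and> (\<lambda>y. y * \<sigma> s) ` Y = Y)"

definition bifree :: "('g, 'b) monoid_scheme \<Rightarrow> ('o::comm_ring_1 \<Rightarrow> 'a::ring_1) \<Rightarrow> ('g \<Rightarrow> 'a) \<Rightarrow> bool" where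
  "bifree S \<iota> \<sigma> \<longleftrightarrow> (\<exists>Y. O_basis \<iota> Y \<and> SS_invariant S \<sigma> Y \<and>
     (\<forall>s\<in>carrier S. \<forall>y\<in>Y. \<sigma> s * y = y \<longrightarrow> s = \<one>\<^bsub>S\<^esub>) \<and>
     (\<forall>s\<in>carrier S. \<forall>y\<in>Y. y * \<sigma> s = y \<longrightarrow> s = \<one>\<^bsub>S\<^esub>))"

definition bact :: "('g, 'b) monoid_scheme \<Rightarrow> ('g \<Rightarrow> 'a::ring_1) \<Rightarrow> 'g \<times> 'g \<Rightarrow> 'a \<Rightarrow> 'a" where
  "bact S \<sigma> u a = \<sigma> (fst u) * a * \<sigma> (inv\<^bsub>S\<^esub> (snd u))"

definition fixed :: "('g, 'b) monoid_scheme \<Rightarrow> ('g \<Rightarrow> 'a::ring_1) \<Rightarrow> ('g \<times> 'g) set \<Rightarrow> 'a set" where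
  "fixed S \<sigma> U = {a. \<forall>u\<in>U. bact S \<sigma> u a = a}"

definition trace :: "('g, 'b) monoid_scheme \<Rightarrow> ('g \<Rightarrow> 'a::ring_1) \<Rightarrow> ('g \<times> 'g) set \<Rightarrow> ('g \<times> 'g) set \<Rightarrow> 'a \<Rightarrow> 'a" where
  "trace S \<sigma> V U a = (\<Sum>C\<in>{u <#\<^bsub>S \<times>\<times> S\<^esub> V | u. u \<in> U}. bact S \<sigma> (SOME u. u \<in> C) a)"

definition mfixed :: "'o::comm_ring_1 set \<Rightarrow> ('o \<Rightarrow> 'a::ring_1) \<Rightarrow> ('g, 'b) monoid_scheme \<Rightarrow> ('g \<Rightarrow> 'a) \<Rightarrow> ('g \<times> 'g) set \<Rightarrow> 'a set" where
  "mfixed M \<iota> S \<sigma> U = {a. \<exists>(n::nat) r b. (\<forall>i<n. r i \<in> M \<and> b i \<in> fixed S \<sigma> U) \<and> a = (\<Sum>i<n. \<iota> (r i) * b i)}"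

definition brauer_kernel :: "'o::comm_ring_1 set \<Rightarrow> ('o \<Rightarrow> 'a::ring_1) \<Rightarrow> ('g, 'b) monoid_scheme \<Rightarrow> ('g \<Rightarrow> 'a) \<Rightarrow> ('g \<times> 'g) set \<Rightarrow> 'a set" where
  "brauer_kernel M \<iota> S \<sigma> U = {x + (\<Sum>i<n. trace S \<sigma> (V i) U (b i)) | x (n::nat) V b.
      x \<in> mfixed M \<iota> S \<sigma> U \<and>
      (\<forall>i<n. subgroup (V i) (S \<times>\<times> S) \<and> V i \<subset> U \<and> b i \<in> fixed S \<sigma> (V i))}"

definition brauer_nonzero :: "'o::comm_ring_1 set \<Rightarrow> ('o \<Rightarrow> 'a::ring_1) \<Rightarrow> ('g, 'b) monoid_scheme \<Rightarrow> ('g \<Rightarrow> 'a) \<Rightarrow> ('g \<times> 'g) set \<Rightarrow> bool" where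
  "brauer_nonzero M \<iota> S \<sigma> U \<longleftrightarrow> \<not> fixed S \<sigma> U \<subseteq> brauer_kernel M \<iota> S \<sigma> U"

definition Delta :: "('g \<Rightarrow> 'g) \<Rightarrow> 'g set \<Rightarrow> ('g \<times> 'g) set" where
  "Delta \<phi> P = {(\<phi> x, x) | x. x \<in> P}"

definition inj_hom_into :: "('g, 'b) monoid_scheme \<Rightarrow> 'g set \<Rightarrow> 'g set \<Rightarrow> ('g \<Rightarrow> 'g) \<Rightarrow> bool" where
  "inj_hom_into S P Q \<phi> \<longleftrightarrow> \<phi> ` P \<subseteq> Q \<and> inj_on \<phi> P \<and>
     (\<forall>x\<in>P. \<forall>y\<in>P. \<phi> (x \<otimes>\<^bsub>S\<^esub> y) = \<phi> x \<otimes>\<^bsub>S\<^esub> \<phi> y)"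

definition FHom :: "'o::comm_ring_1 set \<Rightarrow> ('o \<Rightarrow> 'a::ring_1) \<Rightarrow> ('g, 'b) monoid_scheme \<Rightarrow> ('g \<Rightarrow> 'a) \<Rightarrow> 'g set \<Rightarrow> 'g set \<Rightarrow> ('g \<Rightarrow> 'g) set" where
  "FHom M \<iota> S \<sigma> P Q = {\<phi>. inj_hom_into S P Q \<phi> \<and> brauer_nonzero M \<iota> S \<sigma> (Delta \<phi> P)}"

definition divisible_alg :: "'o::comm_ring_1 set \<Rightarrow> ('o \<Rightarrow> 'a::ring_1) \<Rightarrow> ('g, 'b) monoid_scheme \<Rightarrow> ('g \<Rightarrow> 'a) \<Rightarrow> bool" where
  "divisible_alg M \<iota> S \<sigma> \<longleftrightarrow> interior_alg S \<iota> \<sigma> \<and> bifree S \<iota> \<sigma> \<and>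
     (\<forall>P Q. subgroup P S \<and> subgroup Q S \<and> P \<subseteq> Q \<longrightarrow> id \<in> FHom M \<iota> S \<sigma> P Q) \<and>
     (\<forall>P Q R \<phi> \<psi>. subgroup P S \<and> subgroup Q S \<and> subgroup R S \<and>
        \<phi> \<in> FHom M \<iota> S \<sigma> P Q \<and> \<psi> \<in> FHom M \<iota> S \<sigma> Q R \<longrightarrow> \<psi> \<circ> \<phi> \<in> FHom M \<iota> S \<sigma> P R) \<and>
     (\<forall>P Q \<phi>. subgroup P S \<and> subgroup Q S \<and> \<phi> \<in> FHom M \<iota> S \<sigma> P Q \<longrightarrow>
        \<phi> \<in> FHom M \<iota> S \<sigma> P (\<phi> ` P) \<and>
        (\<exists>\<chi>. \<chi> \<in> FHom M \<iota> S \<sigma> (\<phi> ` P) P \<and> (\<forall>x\<in>P. \<chi> (\<phi> x) = x) \<and> (\<forall>y\<in>\<phi> ` P. \<phi> (\<chi> y) = y)))"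

definition twisted_biset_iso :: "('g, 'b) monoid_scheme \<Rightarrow> ('g \<Rightarrow> 'a::ring_1) \<Rightarrow> 'a set \<Rightarrow> 'g set \<Rightarrow> ('g \<Rightarrow> 'g) \<Rightarrow> bool" where
  "twisted_biset_iso S \<sigma> Y P \<phi> \<longleftrightarrow> (\<exists>f. bij_betw f Y Y \<and>
     (\<forall>x\<in>P. \<forall>s\<in>carrier S. \<forall>y\<in>Y. f (\<sigma> (\<phi> x) * y * \<sigma> s) = \<sigma> x * f y * \<sigma> s))"

end

theory Submission
  imports Defs "HOL-Algebra.Left_Coset" "Jordan_Normal_Form.Determinant"
begin

(*
  If no basis element were fixed by Delta(phi, P), every Delta(phi, P)-fixed element would be a
  sum of orbit sums of basis elements, i.e. of relative traces from proper subgroups, and the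
  Brauer quotient A(Delta(phi, P)) would vanish. So some unit y0 in Y satisfies
  sigma(phi x) y0 = y0 sigma(x) for x in P, and left multiplication by y0^-1 is an isomorphism
  of (P, S)-bisets from ^phi_P Y_S onto the (P, S)-stable basis y0^-1 Y.

  Two bases stable under a p-subgroup H of S x S have equally many H-fixed elements: modulo m the
  transition matrices between their H-fixed parts are mutually inverse, because relative traces
  from proper subgroups of H have coefficients divisible by p at H-fixed basis elements. Hence
  y0^-1 Y and Y have the same marks as (P, S)-bisets, and finite bisets over a group with the same
  marks are isomorphic.
*)

section \<open>Congruences modulo an ideal\<close>

lemma ideal_zero: "is_ideal M \<Longrightarrow> 0 \<in> M"
  unfolding is_ideal_def by blast

lemma ideal_add: "is_ideal M \<Longrightarrow> x \<in> M \<Longrightarrow> y \<in> M \<Longrightarrow> x + y \<in> M"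
  unfolding is_ideal_def by blast

lemma ideal_mult_left: "is_ideal M \<Longrightarrow> x \<in> M \<Longrightarrow> r * x \<in> M"
  unfolding is_ideal_def by blast

lemma ideal_mult_right: "is_ideal M \<Longrightarrow> x \<in> M \<Longrightarrow> x * r \<in> M"
  unfolding is_ideal_def by (metis mult.commute)

lemma ideal_uminus: "is_ideal M \<Longrightarrow> x \<in> M \<Longrightarrow> - x \<in> M"
  using ideal_mult_left[of M x "- 1"] by simp

lemma ideal_sum: "is_ideal M \<Longrightarrow> (\<And>x. x \<in> A \<Longrightarrow> f x \<in> M) \<Longrightarrow> sum f A \<in> M"
  by (induction A rule: infinite_finite_induct) (auto intro: ideal_zero ideal_add)

lemma ideal_sum_diff:
  "is_ideal M \<Longrightarrow> (\<And>x. x \<in> A \<Longrightarrow> f x - g x \<in> M) \<Longrightarrow> sum f A - sum g A \<in> M"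
  using ideal_sum[of M A "\<lambda>x. f x - g x"] by (simp add: sum_subtractf)

lemma ideal_prod_diff:
  fixes M :: "'o::comm_ring_1 set"
  assumes I: "is_ideal M"
  shows "(\<And>x. x \<in> A \<Longrightarrow> f x - g x \<in> M) \<Longrightarrow> prod f A - prod g A \<in> M"
proof (induction A rule: infinite_finite_induct)
  case (insert x F)
  have "prod f (insert x F) - prod g (insert x F) = f x * (prod f F - prod g F) + (f x - g x) * prod g F"
    using insert by (simp add: algebra_simps)
  then show ?case
    using insert I by (auto intro: ideal_add ideal_mult_left ideal_mult_right)
qed (use ideal_zero[OF I] in simp_all)

lemma det_diff_in_ideal:
  fixes M :: "'o::comm_ring_1 set"
  assumes I: "is_ideal M" and C: "C \<in> carrier_mat n n" and D: "D \<in> carrier_mat n n"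
    and entries: "\<And>i j. i < n \<Longrightarrow> j < n \<Longrightarrow> C $$ (i, j) - D $$ (i, j) \<in> M"
  shows "det C - det D \<in> M"
proof -
  have "(\<Sum>p | p permutes {0..<n}. of_int (sign p) * (\<Prod>i = 0..<n. C $$ (i, p i)))
     - (\<Sum>p | p permutes {0..<n}. of_int (sign p) * (\<Prod>i = 0..<n. D $$ (i, p i))) \<in> M"
  proof (rule ideal_sum_diff[OF I])
    fix p assume "p \<in> {p. p permutes {0..<n}}"
    then have "\<And>i. i < n \<Longrightarrow> p i < n" by (auto simp: permutes_in_image)
    then have "(\<Prod>i = 0..<n. C $$ (i, p i)) - (\<Prod>i = 0..<n. D $$ (i, p i)) \<in> M"
      by (intro ideal_prod_diff[OF I] entries) auto
    then show "of_int (sign p) * (\<Prod>i = 0..<n. C $$ (i, p i))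
        - of_int (sign p) * (\<Prod>i = 0..<n. D $$ (i, p i)) \<in> M"
      using ideal_mult_left[OF I] by (metis right_diff_distrib)
  qed
  then show ?thesis using C D by (simp add: det_def)
qed

text \<open>Pad both factors to \<open>n \<times> n\<close>: if \<open>m < n\<close> the padded right factor has a zero row, so
  the determinant of the product is \<open>0\<close>, whereas it is \<open>1\<close> modulo the ideal.\<close>

lemma le_if_right_inverse_mod_ideal:
  fixes M :: "'o::comm_ring_1 set" and P Q :: "nat \<Rightarrow> nat \<Rightarrow> 'o"
  assumes I: "is_ideal M" and proper: "1 \<notin> M"
    and inverse: "\<And>i k. i < n \<Longrightarrow> k < n \<Longrightarrow> (\<Sum>j<m. P i j * Q j k) - (if i = k then 1 else 0) \<in> M"
  shows "n \<le> m"
proof (rule ccontr)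
  assume "\<not> n \<le> m"
  then have mn: "m < n" by simp
  define A where "A = mat n n (\<lambda>(i, j). if j < m then P i j else 0)"
  define B where "B = mat n n (\<lambda>(j, k). if j < m then Q j k else 0)"
  have A: "A \<in> carrier_mat n n" and B: "B \<in> carrier_mat n n" by (auto simp: A_def B_def)
  have AB: "(A * B) $$ (i, k) = (\<Sum>j<m. P i j * Q j k)" if "i < n" "k < n" for i k
  proof -
    have "(A * B) $$ (i, k) = (\<Sum>j = 0..<n. A $$ (i, j) * B $$ (j, k))"
      using that A B by (simp add: scalar_prod_def)
    also have "\<dots> = (\<Sum>j = 0..<n. if j < m then P i j * Q j k else 0)"
      using that by (intro sum.cong) (auto simp: A_def B_def)
    also have "\<dots> = (\<Sum>j \<in> {0..<n} \<inter> {j. j < m}. P i j * Q j k)"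
      by (simp add: sum.inter_restrict)
    also have "{0..<n} \<inter> {j. j < m} = {..<m}" using mn by auto
    finally show ?thesis .
  qed
  have "det B = 0"
  proof -
    have "(\<Prod>i = 0..<n. B $$ (i, p i)) = 0" if "p permutes {0..<n}" for p
    proof (rule prod_zero)
      show "\<exists>i \<in> {0..<n}. B $$ (i, p i) = 0"
        using mn that by (intro bexI[of _ "n - 1"]) (auto simp: B_def permutes_in_image)
    qed simp
    then show ?thesis using B by (simp add: det_def)
  qed
  then have "det (A * B) = 0" using det_mult[OF A B] by simp
  moreover have "det (A * B) - det (1\<^sub>m n) \<in> M"
    using A B by (intro det_diff_in_ideal[OF I]) (auto simp: AB inverse)
  ultimately have "- 1 \<in> M" by simp
  then show False using ideal_uminus[OF I] proper by fastforce
qed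

lemma card_le_if_right_inverse_mod_ideal:
  fixes M :: "'o::comm_ring_1 set" and P :: "'i \<Rightarrow> 'j \<Rightarrow> 'o" and Q :: "'j \<Rightarrow> 'i \<Rightarrow> 'o"
  assumes I: "is_ideal M" and proper: "1 \<notin> M" and finite: "finite A" "finite B"
    and inverse: "\<And>i k. i \<in> A \<Longrightarrow> k \<in> A \<Longrightarrow> (\<Sum>j\<in>B. P i j * Q j k) - (if i = k then 1 else 0) \<in> M"
  shows "card A \<le> card B"
proof -
  obtain e where e: "bij_betw e {0..<card A} A" using ex_bij_betw_nat_finite[OF finite(1)] by blast
  obtain d where d: "bij_betw d {0..<card B} B" using ex_bij_betw_nat_finite[OF finite(2)] by blast
  show ?thesis
  proof (rule le_if_right_inverse_mod_ideal[OF I proper])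
    fix i k assume i: "i < card A" and k: "k < card A"
    have "(\<Sum>j<card B. P (e i) (d j) * Q (d j) (e k)) = (\<Sum>j\<in>B. P (e i) j * Q j (e k))"
      using sum.reindex_bij_betw[OF d, of "\<lambda>j. P (e i) j * Q j (e k)"] by (simp add: atLeast0LessThan)
    moreover have "(e i = e k) = (i = k)"
      using bij_betw_imp_inj_on[OF e] i k by (simp add: inj_on_eq_iff)
    ultimately show "(\<Sum>j<card B. P (e i) (d j) * Q (d j) (e k)) - (if i = k then 1 else 0) \<in> M"
      using inverse[of "e i" "e k"] bij_betw_apply[OF e] i k by simp
  qed
qed

section \<open>Marks of finite \<open>K\<close>-sets\<close>

locale subgroup_action =
  fixes G :: "('u, 'c) monoid_scheme" and K :: "'u set" and act :: "'u \<Rightarrow> 'x \<Rightarrow> 'x"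
  assumes group_G: "group G" and subgroup_K: "subgroup K G"
    and act_one: "act \<one>\<^bsub>G\<^esub> x = x"
    and act_mult: "u \<in> K \<Longrightarrow> v \<in> K \<Longrightarrow> act (u \<otimes>\<^bsub>G\<^esub> v) x = act u (act v x)"
begin

definition stabilizer :: "'x \<Rightarrow> 'u set" where
  "stabilizer x = {u \<in> K. act u x = x}"

definition orbit :: "'x \<Rightarrow> 'x set" where
  "orbit x = (\<lambda>u. act u x) ` K"

definition fixed_points :: "'u set \<Rightarrow> 'x set \<Rightarrow> 'x set" where
  "fixed_points H X = {x \<in> X. \<forall>h\<in>H. act h x = x}"

definition invariant :: "'x set \<Rightarrow> bool" where
  "invariant X \<longleftrightarrow> (\<forall>u\<in>K. \<forall>x\<in>X. act u x \<in> X)"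

definition equivariant_bij :: "('x \<Rightarrow> 'x) \<Rightarrow> 'x set \<Rightarrow> 'x set \<Rightarrow> bool" where
  "equivariant_bij f X X' \<longleftrightarrow> bij_betw f X X' \<and> (\<forall>u\<in>K. \<forall>x\<in>X. f (act u x) = act u (f x))"

definition same_marks :: "'x set \<Rightarrow> 'x set \<Rightarrow> bool" where
  "same_marks X X' \<longleftrightarrow>
     (\<forall>H. subgroup H G \<and> H \<subseteq> K \<longrightarrow> card (fixed_points H X) = card (fixed_points H X'))"

lemmas K_one = subgroup.one_closed[OF subgroup_K]
lemmas K_mult = subgroup.m_closed[OF subgroup_K]
lemmas K_inv = subgroup.m_inv_closed[OF subgroup_K]
lemmas K_carrier = subgroup.mem_carrier[OF subgroup_K]

lemma act_inv_act: "u \<in> K \<Longrightarrow> act (inv\<^bsub>G\<^esub> u) (act u x) = x"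
  using act_mult[of "inv\<^bsub>G\<^esub> u" u x] K_inv K_carrier group_G act_one by (metis group.l_inv)

lemma act_act_inv: "u \<in> K \<Longrightarrow> act u (act (inv\<^bsub>G\<^esub> u) x) = x"
  using act_mult[of u "inv\<^bsub>G\<^esub> u" x] K_inv K_carrier group_G act_one by (metis group.r_inv)

lemma orbit_self: "x \<in> orbit x"
  unfolding orbit_def using K_one act_one by (metis image_eqI)

lemma act_in_orbit: "z \<in> orbit x \<Longrightarrow> u \<in> K \<Longrightarrow> act u z \<in> orbit x"
  unfolding orbit_def using K_mult by (auto simp flip: act_mult)

lemma act_notin_orbit: "z \<notin> orbit x \<Longrightarrow> u \<in> K \<Longrightarrow> act u z \<notin> orbit x"
  using act_in_orbit[of "act u z" x "inv\<^bsub>G\<^esub> u"] act_inv_act K_inv by auto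

lemma orbit_eq: "z \<in> orbit y \<Longrightarrow> orbit z = orbit y"
proof -
  assume z: "z \<in> orbit y"
  then obtain v where v: "v \<in> K" "z = act v y" by (auto simp: orbit_def)
  have "act (inv\<^bsub>G\<^esub> v) z \<in> orbit z" by (rule act_in_orbit[OF orbit_self K_inv[OF v(1)]])
  then have "y \<in> orbit z" using act_inv_act[OF v(1)] v(2) by simp
  then show ?thesis using z act_in_orbit by (auto simp: orbit_def)
qed

lemma invariant_orbit: "invariant (orbit x)"
  by (simp add: invariant_def act_in_orbit)

lemma orbit_subset: "invariant X \<Longrightarrow> x \<in> X \<Longrightarrow> orbit x \<subseteq> X"
  by (auto simp: invariant_def orbit_def)

lemma invariant_Diff_orbit: "invariant X \<Longrightarrow> invariant (X - orbit x)"
  by (auto simp: invariant_def act_notin_orbit)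

lemma subgroup_stabilizer: "subgroup (stabilizer x) G"
proof
  show "stabilizer x \<subseteq> carrier G" using K_carrier by (auto simp: stabilizer_def)
  show "\<one>\<^bsub>G\<^esub> \<in> stabilizer x" using K_one act_one by (auto simp: stabilizer_def)
  show "u \<otimes>\<^bsub>G\<^esub> v \<in> stabilizer x" if "u \<in> stabilizer x" "v \<in> stabilizer x" for u v
    using that act_mult K_mult by (auto simp: stabilizer_def)
  show "inv\<^bsub>G\<^esub> u \<in> stabilizer x" if "u \<in> stabilizer x" for u
    using that K_inv act_inv_act[of u x] by (auto simp: stabilizer_def)
qed

lemma act_eq_iff_inv_mult_stabilizer:
  assumes u: "u \<in> K" and v: "v \<in> K"
  shows "act u x = act v x \<longleftrightarrow> inv\<^bsub>G\<^esub> u \<otimes>\<^bsub>G\<^esub> v \<in> stabilizer x"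
proof -
  have "act (inv\<^bsub>G\<^esub> u \<otimes>\<^bsub>G\<^esub> v) x = act (inv\<^bsub>G\<^esub> u) (act v x)"
    using act_mult[OF K_inv[OF u] v] .
  then have "act (inv\<^bsub>G\<^esub> u \<otimes>\<^bsub>G\<^esub> v) x = x \<longleftrightarrow> act u x = act v x"
    using act_inv_act[OF u] act_act_inv[OF u] by metis
  then show ?thesis using K_mult[OF K_inv[OF u] v] by (auto simp: stabilizer_def)
qed

lemma equivariant_bij_orbits:
  assumes same: "stabilizer x = stabilizer x'"
  shows "\<exists>h. equivariant_bij h (orbit x) (orbit x')"
proof -
  have same_act: "act u x = act v x \<longleftrightarrow> act u x' = act v x'" if "u \<in> K" "v \<in> K" for u v
    using act_eq_iff_inv_mult_stabilizer[OF that] same by simp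
  define h where "h z = act (SOME u. u \<in> K \<and> z = act u x) x'" for z
  have h_act: "h (act u x) = act u x'" if u: "u \<in> K" for u
  proof -
    have "\<exists>v. v \<in> K \<and> act u x = act v x" using u by blast
    then have "(SOME v. v \<in> K \<and> act u x = act v x) \<in> K \<and> act u x = act (SOME v. v \<in> K \<and> act u x = act v x) x"
      by (rule someI_ex)
    then show ?thesis unfolding h_def using same_act u by metis
  qed
  have "inj_on h (orbit x)"
  proof (rule inj_onI)
    fix z1 z2 assume "z1 \<in> orbit x" "z2 \<in> orbit x" "h z1 = h z2"
    then show "z1 = z2" using same_act h_act by (auto simp: orbit_def)
  qed
  moreover have "h ` orbit x = orbit x'"
    unfolding orbit_def image_image using h_act by (intro image_cong) auto
  moreover have "h (act u z) = act u (h z)" if u: "u \<in> K" and z: "z \<in> orbit x" for u z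
  proof -
    obtain v where v: "v \<in> K" "z = act v x" using z by (auto simp: orbit_def)
    then show ?thesis using u h_act K_mult by (simp flip: act_mult)
  qed
  ultimately show ?thesis by (auto simp: equivariant_bij_def bij_betw_def)
qed

lemma image_fixed_points:
  assumes f: "equivariant_bij f X X'" and X: "invariant X" and H: "H \<subseteq> K"
  shows "f ` fixed_points H X = fixed_points H X'"
proof
  show "f ` fixed_points H X \<subseteq> fixed_points H X'"
    using f H by (fastforce simp: equivariant_bij_def fixed_points_def bij_betw_def)
  show "fixed_points H X' \<subseteq> f ` fixed_points H X"
  proof
    fix x' assume x': "x' \<in> fixed_points H X'"
    then obtain x where x: "x \<in> X" "x' = f x"
      using f by (auto simp: fixed_points_def equivariant_bij_def bij_betw_def)
    have "act h x = x" if "h \<in> H" for h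
    proof -
      have "f (act h x) = f x" using f x x' that H by (auto simp: equivariant_bij_def fixed_points_def)
      then show ?thesis using f X x(1) that H by (auto simp: equivariant_bij_def bij_betw_def inj_on_def invariant_def)
    qed
    then show "x' \<in> f ` fixed_points H X" using x by (auto simp: fixed_points_def)
  qed
qed

lemma card_fixed_points_eq:
  assumes "equivariant_bij f X X'" "invariant X" "H \<subseteq> K"
  shows "card (fixed_points H X) = card (fixed_points H X')"
proof -
  have "inj_on f (fixed_points H X)"
    using assms(1) by (auto simp: equivariant_bij_def bij_betw_def fixed_points_def inj_on_def)
  then have "card (f ` fixed_points H X) = card (fixed_points H X)" by (rule card_image)
  then show ?thesis using image_fixed_points[OF assms] by simp
qed

lemma card_fixed_points_Diff:
  assumes "finite X" "Z \<subseteq> X"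
  shows "card (fixed_points H (X - Z)) = card (fixed_points H X) - card (fixed_points H Z)"
proof -
  have "fixed_points H (X - Z) = fixed_points H X - fixed_points H Z"
    and sub: "fixed_points H Z \<subseteq> fixed_points H X"
    using assms(2) by (auto simp: fixed_points_def)
  moreover have "finite (fixed_points H Z)"
    using assms by (auto simp: fixed_points_def intro: finite_subset)
  ultimately show ?thesis by (simp add: card_Diff_subset)
qed

lemma same_marks_Diff_orbits:
  assumes fin: "finite X" "finite X'" and inv: "invariant X" "invariant X'"
    and same: "same_marks X X'" and x: "x \<in> X" "x' \<in> X'"
    and h: "equivariant_bij h (orbit x) (orbit x')"
  shows "same_marks (X - orbit x) (X' - orbit x')"
  unfolding same_marks_def
proof (intro allI impI)
  fix H assume H: "subgroup H G \<and> H \<subseteq> K"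
  have orbits: "orbit x \<subseteq> X" "orbit x' \<subseteq> X'" using orbit_subset inv x by auto
  have "card (fixed_points H (X - orbit x)) = card (fixed_points H X) - card (fixed_points H (orbit x))"
    by (rule card_fixed_points_Diff[OF fin(1) orbits(1)])
  also have "\<dots> = card (fixed_points H X') - card (fixed_points H (orbit x'))"
    using same H card_fixed_points_eq[OF h invariant_orbit] by (simp add: same_marks_def)
  also have "\<dots> = card (fixed_points H (X' - orbit x'))"
    by (rule card_fixed_points_Diff[OF fin(2) orbits(2), symmetric])
  finally show "card (fixed_points H (X - orbit x)) = card (fixed_points H (X' - orbit x'))" .
qed

lemma same_stabilizer_if_maximal:
  assumes "finite A" "z \<in> A"
    and "card (fixed_points (stabilizer z) A) = card (fixed_points (stabilizer z) B)"
    and "\<forall>w\<in>B. stabilizer z \<subseteq> stabilizer w \<longrightarrow> stabilizer z = stabilizer w"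
  shows "\<exists>w\<in>B. stabilizer z = stabilizer w"
proof -
  have "z \<in> fixed_points (stabilizer z) A" using assms(2) by (auto simp: fixed_points_def stabilizer_def)
  moreover have "finite (fixed_points (stabilizer z) A)" using assms(1) by (simp add: fixed_points_def)
  ultimately have "card (fixed_points (stabilizer z) B) \<noteq> 0"
    using assms(3) by (metis card_0_eq empty_iff)
  then have "fixed_points (stabilizer z) B \<noteq> {}" by force
  then obtain w where "w \<in> fixed_points (stabilizer z) B" by blast
  then show ?thesis using assms(4) by (auto simp: fixed_points_def stabilizer_def)
qed

text \<open>The partner of an element with maximal stabilizer is found by counting the fixed
  points of that stabilizer.\<close>

lemma same_marks_same_stabilizer:
  assumes fin: "finite X" "finite X'" and ne: "X \<noteq> {}" and same: "same_marks X X'"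
  shows "\<exists>x\<in>X. \<exists>x'\<in>X'. stabilizer x = stabilizer x'"
proof -
  obtain m where "m \<in> stabilizer ` (X \<union> X')" and m_max: "\<forall>b\<in>stabilizer ` (X \<union> X'). m \<subseteq> b \<longrightarrow> m = b"
    using finite_has_maximal[of "stabilizer ` (X \<union> X')"] fin ne by blast
  then obtain z where z: "z \<in> X \<union> X'" and "m = stabilizer z" by blast
  then have max: "\<forall>w\<in>X \<union> X'. stabilizer z \<subseteq> stabilizer w \<longrightarrow> stabilizer z = stabilizer w"
    using m_max by blast
  have "subgroup (stabilizer z) G" "stabilizer z \<subseteq> K"
    using subgroup_stabilizer by (auto simp: stabilizer_def)
  then have marks: "card (fixed_points (stabilizer z) X) = card (fixed_points (stabilizer z) X')"
    using same by (simp add: same_marks_def)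
  from z consider "z \<in> X" | "z \<in> X'" by blast
  then show ?thesis
  proof cases
    case 1
    then show ?thesis using same_stabilizer_if_maximal[OF fin(1) 1 marks] max by blast
  next
    case 2
    then obtain w where "w \<in> X" "stabilizer z = stabilizer w"
      using same_stabilizer_if_maximal[OF fin(2) 2 marks[symmetric]] max by blast
    then show ?thesis using 2 by metis
  qed
qed

lemma equivariant_bij_Un:
  assumes f: "equivariant_bij f X X'" and g: "equivariant_bij g Z Z'"
    and disj: "X \<inter> Z = {}" "X' \<inter> Z' = {}" and inv: "invariant X" "invariant Z"
  shows "equivariant_bij (\<lambda>x. if x \<in> X then f x else g x) (X \<union> Z) (X' \<union> Z')"
proof -
  let ?k = "\<lambda>x. if x \<in> X then f x else g x"
  have "bij_betw ?k X X' = bij_betw f X X'" by (rule bij_betw_cong) simp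
  moreover have "bij_betw ?k Z Z' = bij_betw g Z Z'" by (rule bij_betw_cong) (use disj(1) in auto)
  ultimately have "bij_betw ?k (X \<union> Z) (X' \<union> Z')"
    using f g disj(2) by (intro bij_betw_combine) (auto simp: equivariant_bij_def)
  moreover have "?k (act u x) = act u (?k x)" if "u \<in> K" "x \<in> X \<union> Z" for u x
    using that f g disj(1) inv by (auto simp: equivariant_bij_def invariant_def)
  ultimately show ?thesis by (simp add: equivariant_bij_def)
qed

theorem equivariant_bij_if_same_marks:
  assumes "finite X" "finite X'" "invariant X" "invariant X'" "same_marks X X'"
  shows "\<exists>f. equivariant_bij f X X'"
  using assms
proof (induction "card X" arbitrary: X X' rule: less_induct)
  case less
  have triv: "subgroup {\<one>\<^bsub>G\<^esub>} G" "{\<one>\<^bsub>G\<^esub>} \<subseteq> K" using group_G K_one by (auto simp: group.triv_subgroup)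
  have "fixed_points {\<one>\<^bsub>G\<^esub>} A = A" for A by (auto simp: fixed_points_def act_one)
  then have card_eq: "card X = card X'" using less.prems(5) triv by (auto simp: same_marks_def)
  show ?case
  proof (cases "X = {}")
    case True
    then show ?thesis using card_eq less.prems by (auto simp: equivariant_bij_def)
  next
    case False
    then obtain x x' where xx': "x \<in> X" "x' \<in> X'" "stabilizer x = stabilizer x'"
      using same_marks_same_stabilizer less.prems by blast
    obtain h where h: "equivariant_bij h (orbit x) (orbit x')" using equivariant_bij_orbits[OF xx'(3)] by blast
    have "card (X - orbit x) < card X"
      using xx'(1) orbit_self less.prems(1) by (intro psubset_card_mono) auto
    then obtain g where g: "equivariant_bij g (X - orbit x) (X' - orbit x')"
      using less.hyps less.prems same_marks_Diff_orbits[OF _ _ _ _ _ xx'(1,2) h]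
      by (meson finite_Diff invariant_Diff_orbit)
    have "equivariant_bij (\<lambda>z. if z \<in> orbit x then h z else g z) (orbit x \<union> (X - orbit x)) (orbit x' \<union> (X' - orbit x'))"
      using h g less.prems(3) by (intro equivariant_bij_Un) (auto simp: invariant_orbit invariant_Diff_orbit)
    moreover have "orbit x \<union> (X - orbit x) = X" "orbit x' \<union> (X' - orbit x') = X'"
      using orbit_subset less.prems(3,4) xx'(1,2) by auto
    ultimately show ?thesis by auto
  qed
qed

lemma sum_orbits:
  assumes "finite X" "invariant X"
  shows "sum f X = (\<Sum>Z\<in>orbit ` X. sum f Z)"
proof -
  have "\<Union>(orbit ` X) = X"
  proof
    show "\<Union>(orbit ` X) \<subseteq> X" using orbit_subset[OF assms(2)] by blast
    show "X \<subseteq> \<Union>(orbit ` X)" using orbit_self by blast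
  qed
  moreover have "\<forall>Z\<in>orbit ` X. finite Z"
    using orbit_subset[OF assms(2)] assms(1) by (auto intro: finite_subset)
  moreover have "Z1 \<inter> Z2 = {}" if Z: "Z1 \<in> orbit ` X" "Z2 \<in> orbit ` X" "Z1 \<noteq> Z2" for Z1 Z2
  proof (rule ccontr)
    assume "Z1 \<inter> Z2 \<noteq> {}"
    then obtain z where z: "z \<in> Z1" "z \<in> Z2" by blast
    obtain x1 x2 where "Z1 = orbit x1" "Z2 = orbit x2" using Z(1,2) by blast
    then show False using orbit_eq[of z x1] orbit_eq[of z x2] z Z(3) by simp
  qed
  ultimately show ?thesis using sum.Union_disjoint[of "orbit ` X" f] by auto
qed

lemma invariant_Diff_fixed_points:
  assumes "invariant X"
  shows "invariant (X - fixed_points K X)"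
proof -
  have "act h x = x" if u: "u \<in> K" and fixed: "\<forall>h\<in>K. act h (act u x) = act u x" and h: "h \<in> K" for u x h
  proof -
    have "act h x = act (h \<otimes>\<^bsub>G\<^esub> inv\<^bsub>G\<^esub> u) (act u x)"
      using act_mult[OF h K_inv[OF u]] act_inv_act[OF u] by simp
    also have "\<dots> = act u x" using fixed K_mult[OF h K_inv[OF u]] by blast
    also have "\<dots> = x" using fixed act_inv_act[OF u] K_inv[OF u] by metis
    finally show ?thesis .
  qed
  then show ?thesis using assms unfolding invariant_def fixed_points_def by blast
qed

end

locale interior_algebra =
  fixes \<iota> :: "'o::comm_ring_1 \<Rightarrow> 'a::ring_1" and S :: "('g, 'b) monoid_scheme" and \<sigma> :: "'g \<Rightarrow> 'a"
  assumes O_algebra: "O_algebra \<iota>" and group_S: "group S" and \<sigma>_one: "\<sigma> \<one>\<^bsub>S\<^esub> = 1"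
    and \<sigma>_mult: "s \<in> carrier S \<Longrightarrow> t \<in> carrier S \<Longrightarrow> \<sigma> (s \<otimes>\<^bsub>S\<^esub> t) = \<sigma> s * \<sigma> t"
begin

abbreviation SS where "SS \<equiv> S \<times>\<times> S"
abbreviation act where "act \<equiv> bact S \<sigma>"

lemma group_SS: "group SS"
  by (rule DirProd_group[OF group_S group_S])

lemma \<iota>_add: "\<iota> (x + y) = \<iota> x + \<iota> y"
  and \<iota>_mult: "\<iota> (x * y) = \<iota> x * \<iota> y"
  and \<iota>_one: "\<iota> 1 = 1"
  and \<iota>_central: "\<iota> r * a = a * \<iota> r"
  using O_algebra unfolding O_algebra_def by blast+

lemma \<iota>_zero: "\<iota> 0 = 0"
  using \<iota>_add[of 0 0] by simp

lemma \<sigma>_inv_mult: "s \<in> carrier S \<Longrightarrow> \<sigma> (inv\<^bsub>S\<^esub> s) * \<sigma> s = 1"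
  using \<sigma>_mult[of "inv\<^bsub>S\<^esub> s" s] \<sigma>_one group_S by (simp add: group.l_inv)

lemma act_one: "act \<one>\<^bsub>SS\<^esub> a = a"
  using group_S \<sigma>_one by (simp add: bact_def monoid.inv_one group.is_monoid)

lemma act_mult:
  assumes "u \<in> carrier SS" "v \<in> carrier SS"
  shows "act (u \<otimes>\<^bsub>SS\<^esub> v) a = act u (act v a)"
proof -
  obtain u1 u2 v1 v2 where uv: "u = (u1, u2)" "v = (v1, v2)" by fastforce
  then have c: "u1 \<in> carrier S" "u2 \<in> carrier S" "v1 \<in> carrier S" "v2 \<in> carrier S" using assms by auto
  then have "\<sigma> (inv\<^bsub>S\<^esub> (u2 \<otimes>\<^bsub>S\<^esub> v2)) = \<sigma> (inv\<^bsub>S\<^esub> v2) * \<sigma> (inv\<^bsub>S\<^esub> u2)"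
    using group_S \<sigma>_mult by (simp add: group.inv_mult_group)
  then show ?thesis using uv c \<sigma>_mult by (simp add: bact_def mult.assoc)
qed

lemma act_add: "act u (a + b) = act u a + act u b"
  by (simp add: bact_def algebra_simps)

lemma act_zero: "act u 0 = 0"
  by (simp add: bact_def)

lemma act_sum: "act u (sum f A) = (\<Sum>x\<in>A. act u (f x))"
  by (induction A rule: infinite_finite_induct) (auto simp: act_zero act_add)

lemma act_scalar: "act u (\<iota> r * a) = \<iota> r * act u a"
  by (simp add: bact_def mult.assoc) (metis \<iota>_central mult.assoc)

lemma trace_scalar: "trace S \<sigma> V U (\<iota> r * a) = \<iota> r * trace S \<sigma> V U a"
  by (simp add: trace_def act_scalar sum_distrib_left)

end

lemma interior_algebra_if_interior_alg: "group S \<Longrightarrow> interior_alg S \<iota> \<sigma> \<Longrightarrow> interior_algebra \<iota> S \<sigma>"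
  by (simp add: interior_alg_def interior_algebra_def)

definition coef :: "('o::comm_ring_1 \<Rightarrow> 'a::ring_1) \<Rightarrow> 'a set \<Rightarrow> 'a \<Rightarrow> 'a \<Rightarrow> 'o" where
  "coef \<iota> Y a = (THE c. (\<forall>y. y \<notin> Y \<longrightarrow> c y = 0) \<and> a = (\<Sum>y\<in>Y. \<iota> (c y) * y))"

context interior_algebra
begin

context
  fixes Y assumes basis: "O_basis \<iota> Y"
begin

lemma finite_basis: "finite Y"
  using basis by (simp add: O_basis_def)

lemma coef_spec: "(\<forall>y. y \<notin> Y \<longrightarrow> coef \<iota> Y a y = 0) \<and> a = (\<Sum>y\<in>Y. \<iota> (coef \<iota> Y a y) * y)"
proof -
  have "\<exists>!c. (\<forall>y. y \<notin> Y \<longrightarrow> c y = 0) \<and> a = (\<Sum>y\<in>Y. \<iota> (c y) * y)"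
    using basis by (simp add: O_basis_def)
  then show ?thesis unfolding coef_def by (rule theI')
qed

lemma sum_coef: "(\<Sum>y\<in>Y. \<iota> (coef \<iota> Y a y) * y) = a"
  using coef_spec by metis

lemma coef_unique:
  assumes "\<forall>y. y \<notin> Y \<longrightarrow> c y = 0" "a = (\<Sum>y\<in>Y. \<iota> (c y) * y)"
  shows "coef \<iota> Y a = c"
  unfolding coef_def by (rule the1_equality) (use basis assms in \<open>auto simp: O_basis_def\<close>)

lemma eq_sum_iff_coef: "a = (\<Sum>y\<in>Y. \<iota> (c y) * y) \<longleftrightarrow> (\<forall>y\<in>Y. c y = coef \<iota> Y a y)"
proof
  assume "a = (\<Sum>y\<in>Y. \<iota> (c y) * y)"
  then have "coef \<iota> Y a = (\<lambda>y. if y \<in> Y then c y else 0)"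
    by (intro coef_unique) (auto intro: sum.cong)
  then show "\<forall>y\<in>Y. c y = coef \<iota> Y a y" by simp
next
  assume "\<forall>y\<in>Y. c y = coef \<iota> Y a y"
  then show "a = (\<Sum>y\<in>Y. \<iota> (c y) * y)" using sum_coef[of a] by simp
qed

lemma coef_add: "coef \<iota> Y (a + b) y = coef \<iota> Y a y + coef \<iota> Y b y"
proof -
  have "coef \<iota> Y (a + b) = (\<lambda>y. coef \<iota> Y a y + coef \<iota> Y b y)"
  proof (rule coef_unique)
    show "\<forall>y. y \<notin> Y \<longrightarrow> coef \<iota> Y a y + coef \<iota> Y b y = 0" using coef_spec by simp
    show "a + b = (\<Sum>y\<in>Y. \<iota> (coef \<iota> Y a y + coef \<iota> Y b y) * y)"
      by (simp add: \<iota>_add distrib_right sum.distrib sum_coef)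
  qed
  then show ?thesis by simp
qed

lemma coef_zero: "coef \<iota> Y 0 y = 0"
  using coef_add[of 0 0 y] by simp

lemma coef_diff: "coef \<iota> Y (a - b) y = coef \<iota> Y a y - coef \<iota> Y b y"
  using coef_add[of "a - b" b y] by simp

lemma coef_scalar: "coef \<iota> Y (\<iota> r * a) y = r * coef \<iota> Y a y"
proof -
  have "coef \<iota> Y (\<iota> r * a) = (\<lambda>y. r * coef \<iota> Y a y)"
  proof (rule coef_unique)
    show "\<forall>y. y \<notin> Y \<longrightarrow> r * coef \<iota> Y a y = 0" using coef_spec by simp
    have "\<iota> r * a = \<iota> r * (\<Sum>y\<in>Y. \<iota> (coef \<iota> Y a y) * y)" by (simp only: sum_coef)
    then show "\<iota> r * a = (\<Sum>y\<in>Y. \<iota> (r * coef \<iota> Y a y) * y)"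
      by (simp add: \<iota>_mult sum_distrib_left mult.assoc)
  qed
  then show ?thesis by simp
qed

lemma coef_sum: "coef \<iota> Y (sum f A) y = (\<Sum>i\<in>A. coef \<iota> Y (f i) y)"
  by (induction A rule: infinite_finite_induct) (auto simp: coef_zero coef_add)

lemma coef_basis_element: "z \<in> Y \<Longrightarrow> coef \<iota> Y z y = (if y = z then 1 else 0)"
proof -
  assume z: "z \<in> Y"
  have "(\<Sum>y\<in>Y. \<iota> (if y = z then 1 else 0) * y) = (\<Sum>y\<in>Y. if y = z then y else 0)"
    using \<iota>_one \<iota>_zero by (intro sum.cong) auto
  also have "\<dots> = z" using z finite_basis by simp
  finally have "coef \<iota> Y z = (\<lambda>y. if y = z then 1 else 0)"
    using z by (intro coef_unique) auto
  then show ?thesis by simp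
qed

lemma O_basis_mult_unit:
  assumes inverse: "v * w = 1" "w * v = 1"
  shows "O_basis \<iota> ((*) w ` Y)"
proof -
  have cancel: "v * (w * y) = y" for y using inverse by (simp add: mult.assoc[symmetric])
  then have inj: "inj_on ((*) w) Y" by (metis inj_onI)
  have coords: "a = (\<Sum>z\<in>(*) w ` Y. \<iota> (c z) * z) \<longleftrightarrow> (\<forall>y\<in>Y. c (w * y) = coef \<iota> Y (v * a) y)"
    for a c
  proof -
    have "(\<Sum>z\<in>(*) w ` Y. \<iota> (c z) * z) = (\<Sum>y\<in>Y. \<iota> (c (w * y)) * (w * y))"
      by (simp add: sum.reindex[OF inj])
    also have "\<dots> = (\<Sum>y\<in>Y. w * (\<iota> (c (w * y)) * y))"
      by (intro sum.cong refl) (metis \<iota>_central mult.assoc)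
    also have "\<dots> = w * (\<Sum>y\<in>Y. \<iota> (c (w * y)) * y)"
      by (simp add: sum_distrib_left)
    finally have "a = (\<Sum>z\<in>(*) w ` Y. \<iota> (c z) * z) \<longleftrightarrow> v * a = (\<Sum>y\<in>Y. \<iota> (c (w * y)) * y)"
      using cancel inverse(2) by (metis mult.assoc mult_1_left)
    then show ?thesis using eq_sum_iff_coef by simp
  qed
  have "\<exists>!c. (\<forall>z. z \<notin> (*) w ` Y \<longrightarrow> c z = 0) \<and> a = (\<Sum>z\<in>(*) w ` Y. \<iota> (c z) * z)" for a
  proof (rule ex1I[where a = "\<lambda>z. if z \<in> (*) w ` Y then coef \<iota> Y (v * a) (v * z) else 0"])
    show "(\<forall>z. z \<notin> (*) w ` Y \<longrightarrow> (if z \<in> (*) w ` Y then coef \<iota> Y (v * a) (v * z) else 0) = 0) \<and>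
        a = (\<Sum>z\<in>(*) w ` Y. \<iota> (if z \<in> (*) w ` Y then coef \<iota> Y (v * a) (v * z) else 0) * z)"
      by (simp add: coords cancel)
  next
    fix c assume c: "(\<forall>z. z \<notin> (*) w ` Y \<longrightarrow> c z = 0) \<and> a = (\<Sum>z\<in>(*) w ` Y. \<iota> (c z) * z)"
    show "c = (\<lambda>z. if z \<in> (*) w ` Y then coef \<iota> Y (v * a) (v * z) else 0)"
    proof
      fix z show "c z = (if z \<in> (*) w ` Y then coef \<iota> Y (v * a) (v * z) else 0)"
        using c coords[of a c] cancel by (cases "z \<in> (*) w ` Y") auto
    qed
  qed
  then show ?thesis using finite_basis by (simp add: O_basis_def)
qed

end

end

lemma (in group) some_in_l_coset:
  assumes "u \<in> carrier G" "subgroup V G"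
  shows "\<exists>v\<in>V. (SOME w. w \<in> u <# V) = u \<otimes> v"
proof -
  have "(SOME w. w \<in> u <# V) \<in> u <# V" using lcos_self[OF assms] by (rule someI)
  then show ?thesis by (auto simp: l_coset_def)
qed

definition proper_traces :: "('g, 'b) monoid_scheme \<Rightarrow> ('g \<Rightarrow> 'a::ring_1) \<Rightarrow> ('g \<times> 'g) set \<Rightarrow> 'a set" where
  "proper_traces S \<sigma> U = {\<Sum>i<n. trace S \<sigma> (V i) U (b i) | (n::nat) V b.
     \<forall>i<n. subgroup (V i) (S \<times>\<times> S) \<and> V i \<subset> U \<and> b i \<in> fixed S \<sigma> (V i)}"

lemma proper_traces_subset_brauer_kernel: "proper_traces S \<sigma> U \<subseteq> brauer_kernel M \<iota> S \<sigma> U"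
proof
  fix t assume "t \<in> proper_traces S \<sigma> U"
  then obtain n :: nat and V b where t: "t = (\<Sum>i<n. trace S \<sigma> (V i) U (b i))"
    and Vb: "\<forall>i<n. subgroup (V i) (S \<times>\<times> S) \<and> V i \<subset> U \<and> b i \<in> fixed S \<sigma> (V i)"
    by (auto simp: proper_traces_def)
  have "0 \<in> mfixed M \<iota> S \<sigma> U" unfolding mfixed_def by (rule CollectI, rule exI[of _ 0]) simp
  then show "t \<in> brauer_kernel M \<iota> S \<sigma> U"
    unfolding brauer_kernel_def using t Vb
    by (intro CollectI exI[of _ 0] exI[of _ n] exI[of _ V] exI[of _ b]) simp
qed

lemma zero_in_proper_traces: "0 \<in> proper_traces S \<sigma> U"
  unfolding proper_traces_def by (rule CollectI, rule exI[of _ 0]) simp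

lemma trace_add_proper_traces:
  assumes t: "t \<in> proper_traces S \<sigma> U"
    and W: "subgroup W (S \<times>\<times> S)" "W \<subset> U" and c: "c \<in> fixed S \<sigma> W"
  shows "trace S \<sigma> W U c + t \<in> proper_traces S \<sigma> U"
proof -
  obtain n :: nat and V b where t: "t = (\<Sum>i<n. trace S \<sigma> (V i) U (b i))"
    and Vb: "\<forall>i<n. subgroup (V i) (S \<times>\<times> S) \<and> V i \<subset> U \<and> b i \<in> fixed S \<sigma> (V i)"
    using t by (auto simp: proper_traces_def)
  have "trace S \<sigma> W U c + t = (\<Sum>i<Suc n. trace S \<sigma> ((V(n := W)) i) U ((b(n := c)) i))"
    using t by (simp add: add.commute)
  moreover have "\<forall>i<Suc n. subgroup ((V(n := W)) i) (S \<times>\<times> S) \<and> (V(n := W)) i \<subset> U \<and>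
      (b(n := c)) i \<in> fixed S \<sigma> ((V(n := W)) i)"
    using Vb W c by (simp add: less_Suc_eq)
  ultimately show ?thesis unfolding proper_traces_def by blast
qed

lemma sum_traces_in_proper_traces:
  assumes "\<And>x. x \<in> A \<Longrightarrow> \<exists>V b. subgroup V (S \<times>\<times> S) \<and> V \<subset> U \<and> b \<in> fixed S \<sigma> V \<and> f x = trace S \<sigma> V U b"
  shows "sum f A \<in> proper_traces S \<sigma> U"
  using assms
proof (induction A rule: infinite_finite_induct)
  case (insert x F)
  then obtain V b where "subgroup V (S \<times>\<times> S)" "V \<subset> U" "b \<in> fixed S \<sigma> V" "f x = trace S \<sigma> V U b"
    by blast
  then show ?case using insert trace_add_proper_traces by simp
qed (simp_all add: zero_in_proper_traces)

locale interior_algebra_subgroup = interior_algebra \<iota> S \<sigma>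
  for \<iota> :: "'o::comm_ring_1 \<Rightarrow> 'a::ring_1" and S :: "('g, 'b) monoid_scheme" and \<sigma> +
  fixes H :: "('g \<times> 'g) set"
  assumes subgroup_H: "subgroup H (S \<times>\<times> S)"

lemma (in interior_algebra) subgroup_action_SS:
  assumes "subgroup K SS"
  shows "subgroup_action SS K act"
proof (rule subgroup_action.intro[OF group_SS assms])
  show "act \<one>\<^bsub>SS\<^esub> x = x" for x by (rule act_one)
  show "act (u \<otimes>\<^bsub>SS\<^esub> v) x = act u (act v x)" if "u \<in> K" "v \<in> K" for u v x
    using that act_mult subgroup.mem_carrier[OF assms] by blast
qed

sublocale interior_algebra_subgroup \<subseteq> H: subgroup_action "S \<times>\<times> S" H "bact S \<sigma>"
  by (rule subgroup_action_SS[OF subgroup_H])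

context interior_algebra_subgroup
begin

lemma some_l_coset_in_H:
  assumes "u \<in> H" "subgroup V SS" "V \<subseteq> H"
  shows "(SOME w. w \<in> u <#\<^bsub>SS\<^esub> V) \<in> H"
proof -
  obtain v where "v \<in> V" "(SOME w. w \<in> u <#\<^bsub>SS\<^esub> V) = u \<otimes>\<^bsub>SS\<^esub> v"
    using group.some_in_l_coset[OF group_SS H.K_carrier[OF assms(1)] assms(2)] by blast
  then show ?thesis using assms(1,3) H.K_mult by (simp add: subsetD)
qed

lemma trace_stabilizer_eq_orbit_sum: "trace S \<sigma> (H.stabilizer y) H y = (\<Sum>z\<in>H.orbit y. z)"
proof -
  let ?V = "H.stabilizer y"
  let ?C = "{u <#\<^bsub>SS\<^esub> ?V | u. u \<in> H}"
  define g where "g C = act (SOME w. w \<in> C) y" for C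
  have g: "g (u <#\<^bsub>SS\<^esub> ?V) = act u y" if u: "u \<in> H" for u
  proof -
    obtain v where "v \<in> ?V" "(SOME w. w \<in> u <#\<^bsub>SS\<^esub> ?V) = u \<otimes>\<^bsub>SS\<^esub> v"
      using group.some_in_l_coset[OF group_SS H.K_carrier[OF u] H.subgroup_stabilizer] by blast
    then show ?thesis using H.act_mult[OF u] by (simp add: g_def H.stabilizer_def)
  qed
  have "inj_on g ?C"
  proof (rule inj_onI)
    fix C1 C2 assume "C1 \<in> ?C" "C2 \<in> ?C" "g C1 = g C2"
    then obtain u1 u2 where u: "u1 \<in> H" "u2 \<in> H" "C1 = u1 <#\<^bsub>SS\<^esub> ?V" "C2 = u2 <#\<^bsub>SS\<^esub> ?V"
      and "act u1 y = act u2 y" using g by auto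
    then have "inv\<^bsub>SS\<^esub> u1 \<otimes>\<^bsub>SS\<^esub> u2 \<in> ?V" by (simp add: H.act_eq_iff_inv_mult_stabilizer)
    then have "u2 \<in> u1 <#\<^bsub>SS\<^esub> ?V"
      using subgroup.lcos_module_rev[OF H.subgroup_stabilizer group_SS] H.K_carrier u by blast
    then show "C1 = C2"
      using group.l_repr_independence[OF group_SS _ _ H.subgroup_stabilizer] H.K_carrier u by metis
  qed
  moreover have "g ` ?C = H.orbit y" using g by (auto simp: H.orbit_def image_iff) metis+
  ultimately have "bij_betw g ?C (H.orbit y)" by (simp add: bij_betw_def)
  then have "(\<Sum>C\<in>?C. g C) = (\<Sum>z\<in>H.orbit y. z)" by (rule sum.reindex_bij_betw)
  then show ?thesis by (simp add: trace_def g_def)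
qed

end

locale stable_basis = interior_algebra_subgroup \<iota> S \<sigma> H
  for \<iota> :: "'o::comm_ring_1 \<Rightarrow> 'a::ring_1" and S :: "('g, 'b) monoid_scheme" and \<sigma> H +
  fixes Y :: "'a set"
  assumes basis: "O_basis \<iota> Y" and stable: "u \<in> H \<Longrightarrow> y \<in> Y \<Longrightarrow> bact S \<sigma> u y \<in> Y"
begin

lemma fixed_points_basis: "H.fixed_points H Y = Y \<inter> fixed S \<sigma> H"
  by (auto simp: H.fixed_points_def fixed_def)

lemma invariant_basis: "H.invariant Y"
  by (simp add: H.invariant_def stable)

lemma coef_act:
  assumes u: "u \<in> H" and y: "y \<in> Y"
  shows "coef \<iota> Y (act u a) (act u y) = coef \<iota> Y a y"
proof -
  let ?c = "\<lambda>z. coef \<iota> Y a (act (inv\<^bsub>SS\<^esub> u) z)"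
  have bij: "bij_betw (act u) Y Y"
  proof (rule bij_betw_imageI)
    show "inj_on (act u) Y" using H.act_inv_act[OF u] by (metis inj_onI)
    show "act u ` Y = Y"
      using stable[OF u] stable[OF H.K_inv[OF u]] H.act_act_inv[OF u] by (metis image_subset_iff subsetI subset_antisym imageI)
  qed
  have "(\<Sum>z\<in>Y. \<iota> (?c z) * z) = (\<Sum>y\<in>Y. \<iota> (?c (act u y)) * act u y)"
    using sum.reindex_bij_betw[OF bij, of "\<lambda>z. \<iota> (?c z) * z"] by simp
  also have "\<dots> = act u (\<Sum>y\<in>Y. \<iota> (coef \<iota> Y a y) * y)"
    by (simp add: H.act_inv_act[OF u] act_sum act_scalar)
  also have "\<dots> = act u a" by (simp add: sum_coef[OF basis])
  finally have "\<forall>z\<in>Y. ?c z = coef \<iota> Y (act u a) z"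
    using eq_sum_iff_coef[OF basis] by metis
  then show ?thesis using stable[OF u y] H.act_inv_act[OF u] by metis
qed

lemma coef_fixed_act:
  assumes "a \<in> fixed S \<sigma> H" "u \<in> H" "y \<in> Y"
  shows "coef \<iota> Y a (act u y) = coef \<iota> Y a y"
  using coef_act[OF assms(2,3), of a] assms(1,2) by (simp add: fixed_def)

lemma sum_orbit_eq_trace:
  assumes a: "a \<in> fixed S \<sigma> H" and y: "y \<in> Y"
  shows "(\<Sum>z\<in>H.orbit y. \<iota> (coef \<iota> Y a z) * z) = trace S \<sigma> (H.stabilizer y) H (\<iota> (coef \<iota> Y a y) * y)"
proof -
  have "(\<Sum>z\<in>H.orbit y. \<iota> (coef \<iota> Y a z) * z) = (\<Sum>z\<in>H.orbit y. \<iota> (coef \<iota> Y a y) * z)"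
    using coef_fixed_act[OF a _ y] by (intro sum.cong) (auto simp: H.orbit_def)
  also have "\<dots> = \<iota> (coef \<iota> Y a y) * trace S \<sigma> (H.stabilizer y) H y"
    by (simp add: trace_stabilizer_eq_orbit_sum sum_distrib_left)
  finally show ?thesis by (simp add: trace_scalar)
qed

lemma fixed_minus_fixed_part_in_proper_traces:
  assumes a: "a \<in> fixed S \<sigma> H"
  shows "a - (\<Sum>y\<in>Y \<inter> fixed S \<sigma> H. \<iota> (coef \<iota> Y a y) * y) \<in> proper_traces S \<sigma> H"
proof -
  let ?f = "\<lambda>y. \<iota> (coef \<iota> Y a y) * y"
  define N where "N = Y - H.fixed_points H Y"
  have fin: "finite N" using finite_basis[OF basis] by (simp add: N_def)
  have "a = sum ?f N + (\<Sum>y\<in>Y \<inter> fixed S \<sigma> H. ?f y)"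
    using sum.subset_diff[of "Y \<inter> fixed S \<sigma> H" Y ?f] finite_basis[OF basis] sum_coef[OF basis, of a]
    by (simp add: N_def fixed_points_basis)
  then have "a - (\<Sum>y\<in>Y \<inter> fixed S \<sigma> H. ?f y) = sum ?f N" by (metis add_diff_cancel)
  also have "\<dots> = (\<Sum>Z\<in>H.orbit ` N. sum ?f Z)"
    using H.sum_orbits[OF fin] H.invariant_Diff_fixed_points[OF invariant_basis] by (simp add: N_def)
  also have "\<dots> \<in> proper_traces S \<sigma> H"
  proof (rule sum_traces_in_proper_traces)
    fix Z assume "Z \<in> H.orbit ` N"
    then obtain y where y: "y \<in> Y" "y \<notin> H.fixed_points H Y" "Z = H.orbit y" by (auto simp: N_def)
    have "H.stabilizer y \<subset> H" using y(1,2) by (auto simp: H.stabilizer_def H.fixed_points_def)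
    moreover have "\<iota> (coef \<iota> Y a y) * y \<in> fixed S \<sigma> (H.stabilizer y)"
      by (auto simp: fixed_def act_scalar H.stabilizer_def)
    ultimately show "\<exists>V b. subgroup V SS \<and> V \<subset> H \<and> b \<in> fixed S \<sigma> V \<and> sum ?f Z = trace S \<sigma> V H b"
      using sum_orbit_eq_trace[OF a y(1)] y(3) H.subgroup_stabilizer by blast
  qed
  finally show ?thesis .
qed

lemma fixed_basis_element_if_brauer_nonzero:
  assumes "brauer_nonzero M \<iota> S \<sigma> H"
  shows "Y \<inter> fixed S \<sigma> H \<noteq> {}"
proof
  assume "Y \<inter> fixed S \<sigma> H = {}"
  then have "fixed S \<sigma> H \<subseteq> proper_traces S \<sigma> H"
    using fixed_minus_fixed_part_in_proper_traces by auto
  then have "fixed S \<sigma> H \<subseteq> brauer_kernel M \<iota> S \<sigma> H"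
    using proper_traces_subset_brauer_kernel by (rule order_trans)
  then show False using assms by (simp add: brauer_nonzero_def)
qed

lemma coef_trace_fixed:
  assumes V: "subgroup V SS" "V \<subseteq> H" and b: "b \<in> fixed S \<sigma> V" and y: "y \<in> Y \<inter> fixed S \<sigma> H"
  shows "coef \<iota> Y (trace S \<sigma> V H b) y = of_nat (card {u <#\<^bsub>SS\<^esub> V | u. u \<in> H}) * coef \<iota> Y b y"
proof -
  let ?C = "{u <#\<^bsub>SS\<^esub> V | u. u \<in> H}"
  have "coef \<iota> Y (act (SOME w. w \<in> C) b) y = coef \<iota> Y b y" if C: "C \<in> ?C" for C
  proof -
    obtain u where u: "u \<in> H" "C = u <#\<^bsub>SS\<^esub> V" using C by blast
    then have r: "(SOME w. w \<in> C) \<in> H" using some_l_coset_in_H V by simp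
    then have "act (SOME w. w \<in> C) y = y" using y by (simp add: fixed_def)
    then show ?thesis using coef_act[OF r, of y b] y by simp
  qed
  then have "(\<Sum>C\<in>?C. coef \<iota> Y (act (SOME w. w \<in> C) b) y) = (\<Sum>C\<in>?C. coef \<iota> Y b y)"
    by (rule sum.cong[OF refl])
  then show ?thesis by (simp add: trace_def coef_sum[OF basis])
qed

end

lemma (in group) card_subgroup_prime_power:
  assumes "prime p" "finite (carrier G)" "card (carrier G) = p ^ k" "subgroup H G"
  shows "\<exists>a. card H = p ^ a"
proof -
  have "card (carrier G) = card (rcosets H) * card H" using lagrange[OF assms(4)] by (simp add: Coset.order_def)
  then have "card H dvd p ^ k" using assms(3) by (metis dvd_triv_right)
  then show ?thesis using divides_primepow_nat[OF assms(1)] by blast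
qed

lemma (in group) prime_dvd_card_lcosets:
  assumes p: "prime p" and V: "subgroup V G" and H: "subgroup H G" and VH: "V \<subset> H"
    and fin: "finite H" and card_H: "card H = p ^ a"
  shows "p dvd card {u <#\<^bsub>G\<^esub> V | u. u \<in> H}"
proof -
  let ?C = "{u <#\<^bsub>G\<^esub> V | u. u \<in> H}"
  interpret H: group "G\<lparr>carrier := H\<rparr>" using subgroup.subgroup_is_group[OF H is_group] .
  have "subgroup V (G\<lparr>carrier := H\<rparr>)" using subgroup_incl[OF V H] VH by blast
  then have "card (lcosets\<^bsub>G\<lparr>carrier := H\<rparr>\<^esub> V) * card V = card H"
    using H.l_lagrange fin by (simp add: Coset.order_def)
  moreover have "lcosets\<^bsub>G\<lparr>carrier := H\<rparr>\<^esub> V = ?C" by (auto simp: LCOSETS_def)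
  ultimately have index: "card ?C * card V = p ^ a" using card_H by simp
  then have "card V dvd p ^ a" by (simp flip: index)
  then obtain b where b: "card V = p ^ b" using divides_primepow_nat[OF p] by blast
  have "card V < card H" using psubset_card_mono[OF fin VH] .
  then have "b < a" using b card_H prime_gt_1_nat[OF p] by simp
  have "card ?C * p ^ b = p ^ (a - b) * p ^ b"
    using index b \<open>b < a\<close> by (simp flip: power_add)
  then have "card ?C = p ^ (a - b)" using prime_gt_0_nat[OF p] by simp
  then show ?thesis using \<open>b < a\<close> p by simp
qed

lemma (in stable_basis) coef_proper_traces_in_ideal:
  assumes p: "prime p" and I: "is_ideal M" and pM: "of_nat p \<in> M"
    and H: "finite H" "card H = p ^ a"
    and t: "t \<in> proper_traces S \<sigma> H" and y: "y \<in> Y \<inter> fixed S \<sigma> H"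
  shows "coef \<iota> Y t y \<in> M"
proof -
  obtain n :: nat and V b where t: "t = (\<Sum>i<n. trace S \<sigma> (V i) H (b i))"
    and Vb: "\<forall>i<n. subgroup (V i) SS \<and> V i \<subset> H \<and> b i \<in> fixed S \<sigma> (V i)"
    using t by (auto simp: proper_traces_def)
  have "coef \<iota> Y (trace S \<sigma> (V i) H (b i)) y \<in> M" if "i < n" for i
  proof -
    have "p dvd card {u <#\<^bsub>SS\<^esub> V i | u. u \<in> H}"
      using group.prime_dvd_card_lcosets[OF group_SS p _ subgroup_H _ H] Vb that by blast
    then obtain q where "card {u <#\<^bsub>SS\<^esub> V i | u. u \<in> H} = p * q" by (rule dvdE)
    then have "(of_nat (card {u <#\<^bsub>SS\<^esub> V i | u. u \<in> H}) :: 'o) \<in> M"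
      using ideal_mult_right[OF I pM] by simp
    moreover have "V i \<subseteq> H" "subgroup (V i) SS" "b i \<in> fixed S \<sigma> (V i)" using Vb that by auto
    ultimately show ?thesis
      using coef_trace_fixed[of "V i" "b i" y] y ideal_mult_right[OF I] by simp
  qed
  then have "(\<Sum>i<n. coef \<iota> Y (trace S \<sigma> (V i) H (b i)) y) \<in> M" by (intro ideal_sum[OF I]) simp
  then show ?thesis using t by (simp add: coef_sum[OF basis])
qed

lemma (in interior_algebra) stable_basisI:
  "O_basis \<iota> Y \<Longrightarrow> subgroup H SS \<Longrightarrow> (\<And>u y. u \<in> H \<Longrightarrow> y \<in> Y \<Longrightarrow> act u y \<in> Y) \<Longrightarrow> stable_basis \<iota> S \<sigma> H Y"
  by (intro stable_basis.intro interior_algebra_subgroup.intro stable_basis_axioms.intro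
      interior_algebra_subgroup_axioms.intro interior_algebra_axioms)

lemma (in interior_algebra) act_closed_if_SS_invariant:
  assumes "SS_invariant S \<sigma> Y" "u \<in> carrier SS" "y \<in> Y"
  shows "act u y \<in> Y"
proof -
  obtain s t where u: "u = (s, t)" "s \<in> carrier S" "t \<in> carrier S" using assms(2) by auto
  then have "\<sigma> s * y \<in> Y" "inv\<^bsub>S\<^esub> t \<in> carrier S"
    using assms(1,3) group_S by (auto simp: SS_invariant_def)
  then have "\<sigma> s * y * \<sigma> (inv\<^bsub>S\<^esub> t) \<in> Y" using assms(1) unfolding SS_invariant_def by blast
  then show ?thesis using u by (simp add: bact_def)
qed

section \<open>Counting fixed basis elements\<close>

locale p_interior_algebra = interior_algebra \<iota> S \<sigma>
  for \<iota> :: "'o::comm_ring_1 \<Rightarrow> 'a::ring_1" and S :: "('g, 'b) monoid_scheme" and \<sigma> +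
  fixes M :: "'o set" and p :: nat
  assumes prime_p: "prime p" and ideal_M: "is_ideal M" and proper_M: "1 \<notin> M"
    and p_in_M: "of_nat p \<in> M"
    and finite_S: "finite (carrier S)" and p_group_S: "\<exists>k. card (carrier S) = p ^ k"
begin

lemma p_group_subgroup:
  assumes "subgroup H SS"
  shows "finite H" "\<exists>a. card H = p ^ a"
proof -
  obtain k where k: "card (carrier S) = p ^ k" using p_group_S by blast
  have fin: "finite (carrier SS)" using finite_S by simp
  then show "finite H" using subgroup.subset[OF assms] finite_subset by blast
  have "card (carrier SS) = p ^ (k + k)" using k by (simp add: card_cartesian_product power_add)
  then show "\<exists>a. card H = p ^ a"
    using group.card_subgroup_prime_power[OF group_SS prime_p fin _ assms] by blast
qed

lemma card_fixed_basis_le: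
  assumes Y1: "stable_basis \<iota> S \<sigma> H Y1" and Y2: "stable_basis \<iota> S \<sigma> H Y2"
  shows "card (Y1 \<inter> fixed S \<sigma> H) \<le> card (Y2 \<inter> fixed S \<sigma> H)"
proof -
  interpret Y1: stable_basis \<iota> S \<sigma> H Y1 by (rule Y1)
  interpret Y2: stable_basis \<iota> S \<sigma> H Y2 by (rule Y2)
  obtain a where H: "finite H" "card H = p ^ a" using p_group_subgroup[OF Y1.subgroup_H] by blast
  show ?thesis
  proof (rule card_le_if_right_inverse_mod_ideal[OF ideal_M proper_M])
    show "finite (Y1 \<inter> fixed S \<sigma> H)" "finite (Y2 \<inter> fixed S \<sigma> H)"
      using finite_basis[OF Y1.basis] finite_basis[OF Y2.basis] by auto
    fix y y' assume y: "y \<in> Y1 \<inter> fixed S \<sigma> H" and y': "y' \<in> Y1 \<inter> fixed S \<sigma> H"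
    let ?t = "y - (\<Sum>z\<in>Y2 \<inter> fixed S \<sigma> H. \<iota> (coef \<iota> Y2 y z) * z)"
    have "?t \<in> proper_traces S \<sigma> H" using Y2.fixed_minus_fixed_part_in_proper_traces y by blast
    then have "coef \<iota> Y1 ?t y' \<in> M"
      by (rule Y1.coef_proper_traces_in_ideal[OF prime_p ideal_M p_in_M H _ y'])
    moreover have "coef \<iota> Y1 ?t y' =
        (if y = y' then 1 else 0) - (\<Sum>z\<in>Y2 \<inter> fixed S \<sigma> H. coef \<iota> Y2 y z * coef \<iota> Y1 z y')"
      using y by (simp add: coef_diff[OF Y1.basis] coef_sum[OF Y1.basis] coef_scalar[OF Y1.basis]
          coef_basis_element[OF Y1.basis])
    ultimately show "(\<Sum>z\<in>Y2 \<inter> fixed S \<sigma> H. coef \<iota> Y2 y z * coef \<iota> Y1 z y') - (if y = y' then 1 else 0) \<in> M"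
      using ideal_uminus[OF ideal_M] by (metis minus_diff_eq)
  qed
qed

lemma card_fixed_basis_eq:
  "stable_basis \<iota> S \<sigma> H Y1 \<Longrightarrow> stable_basis \<iota> S \<sigma> H Y2 \<Longrightarrow>
    card (Y1 \<inter> fixed S \<sigma> H) = card (Y2 \<inter> fixed S \<sigma> H)"
  by (intro antisym card_fixed_basis_le)

lemma equivariant_bij_stable_bases:
  assumes K: "subgroup K SS"
    and Y1: "O_basis \<iota> Y1" "\<And>u y. u \<in> K \<Longrightarrow> y \<in> Y1 \<Longrightarrow> act u y \<in> Y1"
    and Y2: "O_basis \<iota> Y2" "\<And>u y. u \<in> K \<Longrightarrow> y \<in> Y2 \<Longrightarrow> act u y \<in> Y2"
  shows "\<exists>f. bij_betw f Y1 Y2 \<and> (\<forall>u\<in>K. \<forall>y\<in>Y1. f (act u y) = act u (f y))"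
proof -
  interpret K: subgroup_action SS K act by (rule subgroup_action_SS[OF K])
  have "K.same_marks Y1 Y2"
    unfolding K.same_marks_def
  proof (intro allI impI)
    fix H assume H: "subgroup H SS \<and> H \<subseteq> K"
    then have "stable_basis \<iota> S \<sigma> H Y1" "stable_basis \<iota> S \<sigma> H Y2"
      using Y1 Y2 by (auto intro!: stable_basisI)
    then have "card (Y1 \<inter> fixed S \<sigma> H) = card (Y2 \<inter> fixed S \<sigma> H)" by (rule card_fixed_basis_eq)
    moreover have "K.fixed_points H Y = Y \<inter> fixed S \<sigma> H" for Y
      by (auto simp: K.fixed_points_def fixed_def)
    ultimately show "card (K.fixed_points H Y1) = card (K.fixed_points H Y2)" by simp
  qed
  moreover have "K.invariant Y1" "K.invariant Y2" using Y1(2) Y2(2) by (auto simp: K.invariant_def)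
  ultimately obtain f where "K.equivariant_bij f Y1 Y2"
    using K.equivariant_bij_if_same_marks finite_basis[OF Y1(1)] finite_basis[OF Y2(1)] by blast
  then show ?thesis by (auto simp: K.equivariant_bij_def)
qed

end

section \<open>Twisting by a unit\<close>

lemma (in interior_algebra) unit_fixed_by_Delta_intertwines:
  assumes y0: "y0 \<in> fixed S \<sigma> (Delta \<phi> P)" and unit: "y0 * w = 1" "w * y0 = 1"
    and x: "x \<in> P" and P: "P \<subseteq> carrier S"
  shows "w * \<sigma> (\<phi> x) = \<sigma> x * w"
proof -
  have fixed_x: "\<sigma> (\<phi> x) * y0 * \<sigma> (inv\<^bsub>S\<^esub> x) = y0"
    using y0 x by (auto simp: fixed_def bact_def Delta_def)
  have "\<sigma> (\<phi> x) * y0 = \<sigma> (\<phi> x) * y0 * (\<sigma> (inv\<^bsub>S\<^esub> x) * \<sigma> x)"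
    using \<sigma>_inv_mult x P by auto
  also have "\<dots> = y0 * \<sigma> x" using fixed_x by (simp add: mult.assoc[symmetric])
  finally have "w * (\<sigma> (\<phi> x) * y0) * w = w * (y0 * \<sigma> x) * w" by simp
  then show ?thesis using unit by (simp add: mult.assoc) (metis mult.assoc mult_1_left)
qed

context p_interior_algebra
begin

lemma twisted_biset_iso_if_intertwining_unit:
  assumes basis: "O_basis \<iota> Y" and SS_inv: "SS_invariant S \<sigma> Y" and P: "subgroup P S"
    and \<phi>: "\<And>x. x \<in> P \<Longrightarrow> \<phi> x \<in> carrier S"
    and unit: "v * w = 1" "w * v = 1" and intertwine: "\<And>x. x \<in> P \<Longrightarrow> w * \<sigma> (\<phi> x) = \<sigma> x * w"
  shows "twisted_biset_iso S \<sigma> Y P \<phi>"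
proof -
  let ?K = "P \<times> carrier S"
  have K: "subgroup ?K SS" by (rule DirProd_subgroups[OF group_S P group_S group.subgroup_self[OF group_S]])
  have twist: "act (x, s) (w * y) = w * act (\<phi> x, s) y" if "x \<in> P" for x s y
    using intertwine[OF that] by (simp add: bact_def mult.assoc[symmetric])
  have stable: "act u y \<in> Y" if "u \<in> ?K" "y \<in> Y" for u y
    using act_closed_if_SS_invariant[OF SS_inv _ that(2)] that(1) subgroup.subset[OF P] by auto
  have stable_w: "act u z \<in> (*) w ` Y" if "u \<in> ?K" "z \<in> (*) w ` Y" for u z
    using that twist act_closed_if_SS_invariant[OF SS_inv] \<phi> by auto
  obtain g where g: "bij_betw g ((*) w ` Y) Y"
    and g_act: "\<forall>u\<in>?K. \<forall>z\<in>(*) w ` Y. g (act u z) = act u (g z)"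
    using equivariant_bij_stable_bases[OF K O_basis_mult_unit[OF basis unit] stable_w basis stable] by blast
  have "inj_on ((*) w) Y" using unit by (metis inj_onI mult.assoc mult_1_left)
  then have "bij_betw (\<lambda>y. g (w * y)) Y Y"
    using bij_betw_trans[OF _ g, of "(*) w"] by (simp add: bij_betw_def comp_def)
  moreover have "g (w * (\<sigma> (\<phi> x) * y * \<sigma> s)) = \<sigma> x * g (w * y) * \<sigma> s"
    if x: "x \<in> P" and s: "s \<in> carrier S" and y: "y \<in> Y" for x s y
  proof -
    have u: "(x, inv\<^bsub>S\<^esub> s) \<in> ?K" and inv_inv: "inv\<^bsub>S\<^esub> (inv\<^bsub>S\<^esub> s) = s"
      using x s group_S by auto
    then have "w * (\<sigma> (\<phi> x) * y * \<sigma> s) = act (x, inv\<^bsub>S\<^esub> s) (w * y)"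
      using twist[OF x, of "inv\<^bsub>S\<^esub> s" y] by (simp add: bact_def mult.assoc)
    moreover have "g (act (x, inv\<^bsub>S\<^esub> s) (w * y)) = act (x, inv\<^bsub>S\<^esub> s) (g (w * y))"
      using g_act u y by blast
    ultimately show ?thesis using inv_inv by (simp add: bact_def)
  qed
  ultimately show ?thesis unfolding twisted_biset_iso_def by blast
qed

end

lemma (in group) subgroup_Delta:
  assumes P: "subgroup P G" and \<phi>: "inj_hom_into G P (carrier G) \<phi>"
  shows "subgroup (Delta \<phi> P) (G \<times>\<times> G)"
proof -
  interpret P: group "G\<lparr>carrier := P\<rparr>" using subgroup.subgroup_is_group[OF P is_group] .
  interpret \<phi>: group_hom "G\<lparr>carrier := P\<rparr>" G \<phi>
    using \<phi> by (intro group_hom.intro group_hom_axioms.intro P.is_group is_group)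
      (auto simp: hom_def inj_hom_into_def)
  have \<phi>_inv: "\<phi> (inv x) = inv (\<phi> x)" if "x \<in> P" for x
    using \<phi>.hom_inv[of x] that m_inv_consistent[OF P that] by simp
  show ?thesis
  proof
    show "Delta \<phi> P \<subseteq> carrier (G \<times>\<times> G)"
      using \<phi> subgroup.subset[OF P] by (auto simp: Delta_def inj_hom_into_def)
    show "u \<otimes>\<^bsub>G \<times>\<times> G\<^esub> v \<in> Delta \<phi> P" if "u \<in> Delta \<phi> P" "v \<in> Delta \<phi> P" for u v
      using that \<phi> subgroup.m_closed[OF P] by (auto simp: Delta_def inj_hom_into_def)
    show "\<one>\<^bsub>G \<times>\<times> G\<^esub> \<in> Delta \<phi> P"
      using \<phi>.hom_one subgroup.one_closed[OF P] by (force simp: Delta_def)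
    show "inv\<^bsub>G \<times>\<times> G\<^esub> u \<in> Delta \<phi> P" if "u \<in> Delta \<phi> P" for u
      using that \<phi>_inv \<phi> subgroup.m_inv_closed[OF P] subgroup.mem_carrier[OF P]
      by (force simp: Delta_def inj_hom_into_def)
  qed
qed

lemma standing_O_ideal:
  assumes "standing_O M p"
  shows "is_ideal M" "1 \<notin> M" "of_nat p \<in> M"
  using assms by (auto simp: standing_O_def local_ring_max_def maximal_ideal_def residue_char_def)

theorem proposition4p2:
  fixes M :: "'o::idom set" and p :: nat and \<iota> :: "'o \<Rightarrow> 'a::ring_1"
    and S :: "('g, 'b) monoid_scheme" and \<sigma> :: "'g \<Rightarrow> 'a" and Y :: "'a set"
  assumes "prime p" and "standing_O M p"
    and "group S" and "finite (carrier S)" and "\<exists>k. card (carrier S) = p ^ k"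
    and "divisible_alg M \<iota> S \<sigma>"
    and "O_basis \<iota> Y" and "SS_invariant S \<sigma> Y" and "\<forall>y\<in>Y. unit_of y"
  shows "\<forall>P \<phi>. subgroup P S \<and> \<phi> \<in> FHom M \<iota> S \<sigma> P (carrier S) \<longrightarrow> twisted_biset_iso S \<sigma> Y P \<phi>"
proof (intro allI impI, elim conjE)
  fix P \<phi> assume P: "subgroup P S" and \<phi>: "\<phi> \<in> FHom M \<iota> S \<sigma> P (carrier S)"
  have interior: "interior_alg S \<iota> \<sigma>" using assms(6) by (simp add: divisible_alg_def)
  interpret p_interior_algebra \<iota> S \<sigma> M p
    using interior_algebra_if_interior_alg[OF assms(3) interior] standing_O_ideal[OF assms(2)] assms(1,4,5)
    by (simp add: p_interior_algebra_def p_interior_algebra_axioms_def)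
  have hom: "inj_hom_into S P (carrier S) \<phi>" and nonzero: "brauer_nonzero M \<iota> S \<sigma> (Delta \<phi> P)"
    using \<phi> by (simp_all add: FHom_def)
  have Delta: "subgroup (Delta \<phi> P) SS" by (rule group.subgroup_Delta[OF group_S P hom])
  interpret Delta: stable_basis \<iota> S \<sigma> "Delta \<phi> P" Y
    using stable_basisI[OF assms(7) Delta] act_closed_if_SS_invariant[OF assms(8)]
      subgroup.mem_carrier[OF Delta] by blast
  obtain y0 where y0: "y0 \<in> Y" "y0 \<in> fixed S \<sigma> (Delta \<phi> P)"
    using Delta.fixed_basis_element_if_brauer_nonzero[OF nonzero] by blast
  then obtain w where unit: "y0 * w = 1" "w * y0 = 1" using assms(9) by (auto simp: unit_of_def)
  show "twisted_biset_iso S \<sigma> Y P \<phi>"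
    using twisted_biset_iso_if_intertwining_unit[OF assms(7,8) P _ unit]
      unit_fixed_by_Delta_intertwines[OF y0(2) unit _ subgroup.subset[OF P]] hom
    by (auto simp: inj_hom_into_def)
qed

end
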